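(* Let $\Delta\in\mathbb F^{m\times m}$ be a connection matrix with column/row partition consisting of two sets $J_0,J_1$. Let $\tilde\Delta^{t^*+1}$ be the last matrix produced by the Revised 1-Block Incremental Sweeping Algorithm applied to $\Delta$, and let $\Delta^m$ be the last matrix produced by the Incremental Sweeping Algorithm (ISA) applied to $\Delta$. Then $\tilde\Delta^{t^*+1}=\Delta^m$, and the sets of positions marked as primary pivots by the two algorithms coincide (hence the primary pivots coincide in position and value).
   Context: Throughout, $\mathbb F$ is a field and $m\ge1$. $A_{\cdot j}$ is the $j$-th column of $A$, $A_{IJ}$ the submatrix with rows in $I$ and columns in $J$. $U^{pq}$ is the $m\times m$ matrix whose only nonzero entry is a $1$ in position $(p,q)$. Superscripts on matrices are indices, not powers. A connection matrix (over $\mathbb F$) is a matrix $\Delta\in\mathbb F^{m\times m}$ together with a partition $\{1,\dots,m\}=J_0\sqcup\cdots\sqcup J_b$ (the column/row partition; the $J_k$ need not consist of consecutive integers) such that $\Delta$ is upper triangular, $\Delta\Delta=0$, and $\Delta_{ij}=0$ unless $i<j$ and $(i,j)\in\bigcup_{k=1}^bJ_{k-1}\times J_k$. For $1\le r\le m-1$ the $r$-th diagonal is $\{(j-r,j):r<j\le m\}$. Incremental Sweeping Algorithm (ISA) applied to a connection matrix $\Delta$: set $\Delta^0=\Delta^1=\Delta$. For $r=1,\dots,m-1$ in turn: (Markup) for every position $(j-r,j)$ on the $r$-th diagonal with $\Delta^r_{j-r,j}\ne0$ such that no position in column $j$ was marked as a primary pivot at an earlier iteration: if some position $(j-r,p)$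 of row $j-r$ was marked as a primary pivot at an earlier iteration, mark $(j-r,j)$ as a change-of-basis pivot of iteration $r$; otherwise mark $(j-r,j)$ permanently as a primary pivot. (Update) Let $T^r=I-\sum \frac{\Delta^r_{j-r,j}}{\Delta^r_{j-r,p}}U^{pj}$, the sum running over all change-of-basis pivots $(j-r,j)$ of iteration $r$, where $(j-r,p)$ is the primary pivot position in row $j-r$; set $\Delta^{r+1}=(T^r)^{-1}\Delta^rT^r$. Revised 1-Block Incremental Sweeping Algorithm (for $b=1$): set $C^1=\{1,\dots,m\}$, $\tilde\Delta^1=\Delta$, $t=1$. While $\tilde\Delta^t_{\cdot C^t}\ne0$: let $i_t=\max\{i:\tilde\Delta^t_{iC^t}\ne0\}$, $j_t=\min\{j\in C^t:\tilde\Delta^t_{i_tj}\ne0\}$; mark $(i_t,j_t)$ as a primary pivot; let $\tilde T^t=I-\sum_{j\in C^t,\,j>j_t}\frac{\tilde\Delta^t_{i_tj}}{\tilde\Delta^t_{i_tj_t}}U^{j_tj}$, $\tilde\Delta^{t+1}=\tilde\Delta^t\tilde T^t$, $C^{t+1}=C^t\setminus\{j_t\}$, $t\leftarrow t+1$. Let $t^*$ be the total number of primary pivots marked. *)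

theory Defs
  imports "Jordan_Normal_Form.Gauss_Jordan_Elimination"
begin

text \<open>Matrices are Jordan_Normal_Form matrices of dimension m x m, indexed 0-based
  (row/column index i of the paper corresponds to i-1 here; all notions used only
  depend on the order of indices, so this shift is harmless).\<close>

definition U_mat :: "nat \<Rightarrow> nat \<Rightarrow> nat \<Rightarrow> 'a::field mat" where
  "U_mat m p q = mat m m (\<lambda>(a,b). if a = p \<and> b = q then 1 else 0)"

definition connection_matrix_2 :: "nat \<Rightarrow> 'a::field mat \<Rightarrow> nat set \<Rightarrow> nat set \<Rightarrow> bool" where
  "connection_matrix_2 m D J0 J1 \<longleftrightarrow>
     D \<in> carrier_mat m m \<and>
     J0 \<union> J1 = {0..<m} \<and> J0 \<inter> J1 = {} \<and>
     upper_triangular D \<and> D * D = 0\<^sub>m m m \<and>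
     (\<forall>i<m. \<forall>j<m. D $$ (i,j) \<noteq> 0 \<longrightarrow> i < j \<and> i \<in> J0 \<and> j \<in> J1)"

definition isa_new_primary :: "nat \<Rightarrow> nat \<Rightarrow> 'a::field mat \<Rightarrow> (nat \<times> nat) set \<Rightarrow> (nat \<times> nat) set" where
  "isa_new_primary m r D P =
     {(i, j). r \<le> j \<and> j < m \<and> i = j - r \<and> D $$ (i, j) \<noteq> 0 \<and>
              \<not> (\<exists>k. (k, j) \<in> P) \<and> \<not> (\<exists>p. (i, p) \<in> P)}"

definition isa_cob :: "nat \<Rightarrow> nat \<Rightarrow> 'a::field mat \<Rightarrow> (nat \<times> nat) set \<Rightarrow> (nat \<times> nat) set" where
  "isa_cob m r D P =
     {(i, j). r \<le> j \<and> j < m \<and> i = j - r \<and> D $$ (i, j) \<noteq> 0 \<and>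
              \<not> (\<exists>k. (k, j) \<in> P) \<and> (\<exists>p. (i, p) \<in> P)}"

definition piv_col :: "(nat \<times> nat) set \<Rightarrow> nat \<Rightarrow> nat" where
  "piv_col P i = (THE p. (i, p) \<in> P)"

definition isa_T :: "nat \<Rightarrow> nat \<Rightarrow> 'a::field mat \<Rightarrow> (nat \<times> nat) set \<Rightarrow> 'a mat" where
  "isa_T m r D P =
     mat m m (\<lambda>(a, b). (if a = b then 1 else 0) -
       (\<Sum>(i, j)\<in>isa_cob m r D P.
          (D $$ (i, j) / D $$ (i, piv_col P i)) * (U_mat m (piv_col P i) j $$ (a, b))))"

definition isa_step :: "nat \<Rightarrow> nat \<Rightarrow> 'a::field mat \<times> (nat \<times> nat) set \<Rightarrow> 'a mat \<times> (nat \<times> nat) set" where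
  "isa_step m r S =
     (let D = fst S; P = snd S; T = isa_T m r D P in
       (the (mat_inverse T) * D * T, P \<union> isa_new_primary m r D P))"

text \<open>isa m D k = (Delta^{k+1}, primary pivots marked in iterations 1..k).\<close>
fun isa :: "nat \<Rightarrow> 'a::field mat \<Rightarrow> nat \<Rightarrow> 'a mat \<times> (nat \<times> nat) set" where
  "isa m D 0 = (D, {})"
| "isa m D (Suc k) = isa_step m (Suc k) (isa m D k)"

definition isa_final :: "nat \<Rightarrow> 'a::field mat \<Rightarrow> 'a mat \<times> (nat \<times> nat) set" where
  "isa_final m D = isa m D (m - 1)"

definition rev_active :: "nat \<Rightarrow> 'a::field mat \<Rightarrow> nat set \<Rightarrow> bool" where
  "rev_active m D C \<longleftrightarrow> (\<exists>i<m. \<exists>j\<in>C. D $$ (i, j) \<noteq> 0)"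

definition rev_i :: "nat \<Rightarrow> 'a::field mat \<Rightarrow> nat set \<Rightarrow> nat" where
  "rev_i m D C = Max {i. i < m \<and> (\<exists>j\<in>C. D $$ (i, j) \<noteq> 0)}"

definition rev_j :: "nat \<Rightarrow> 'a::field mat \<Rightarrow> nat set \<Rightarrow> nat" where
  "rev_j m D C = Min {j \<in> C. D $$ (rev_i m D C, j) \<noteq> 0}"

definition rev_T :: "nat \<Rightarrow> 'a::field mat \<Rightarrow> nat set \<Rightarrow> 'a mat" where
  "rev_T m D C =
     (let it = rev_i m D C; jt = rev_j m D C in
       mat m m (\<lambda>(a, b). (if a = b then 1 else 0) -
         (\<Sum>j\<in>{j \<in> C. j > jt}. (D $$ (it, j) / D $$ (it, jt)) * (U_mat m jt j $$ (a, b)))))"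

definition rev_step :: "nat \<Rightarrow> 'a::field mat \<times> nat set \<times> (nat \<times> nat) set \<Rightarrow> 'a mat \<times> nat set \<times> (nat \<times> nat) set" where
  "rev_step m S =
     (let D = fst S; C = fst (snd S); P = snd (snd S);
          it = rev_i m D C; jt = rev_j m D C in
       (D * rev_T m D C, C - {jt}, P \<union> {(it, jt)}))"

fun rev_loop :: "nat \<Rightarrow> nat \<Rightarrow> 'a::field mat \<times> nat set \<times> (nat \<times> nat) set \<Rightarrow> 'a mat \<times> nat set \<times> (nat \<times> nat) set" where
  "rev_loop m 0 S = S"
| "rev_loop m (Suc n) S =
     (if rev_active m (fst S) (fst (snd S)) then rev_loop m n (rev_step m S) else S)"

text \<open>Since every pass removes one element from C (initially of size m), fuel m
  suffices for the loop to terminate. Result: (final matrix, set of primary pivots).\<close>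
definition rev_final :: "nat \<Rightarrow> 'a::field mat \<Rightarrow> 'a mat \<times> (nat \<times> nat) set" where
  "rev_final m D = (let S = rev_loop m m (D, {0..<m}, {}) in (fst S, snd (snd S)))"

end

theory Submission
  imports Defs "Jordan_Normal_Form.Determinant"
begin

(* Rather than comparing the two runs step by step, we characterise their common output.
   Call (R, P) a sweep result of D if
     - every (i, k) in P is the lowest nonzero entry of column k of R, with at most one
       pivot per row, and every column of R without a pivot is zero, and
     - each column j of R arises from column j of D by subtracting multiples of earlier
       columns of R, where a column k may only be used if its pivot row and everything below
       it are already zero in column j of R (reduced_from).
   Section 1 proves that D determines its sweep result uniquely; the key fact is that a
   nontrivial combination of pivot columns has its lowest nonzero entry at the lowest of
   their pivot rows.  The main theorem is then an instance of uniqueness. *)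

section \<open>Sweep results and their uniqueness\<close>

definition lowest_pivots :: "nat \<Rightarrow> 'a::field mat \<Rightarrow> (nat \<times> nat) set \<Rightarrow> bool" where
  "lowest_pivots m R P \<longleftrightarrow>
     (\<forall>i k. (i, k) \<in> P \<longrightarrow> i < m \<and> k < m \<and> R $$ (i, k) \<noteq> 0 \<and>
        (\<forall>i'. i < i' \<and> i' < m \<longrightarrow> R $$ (i', k) = 0))"

definition one_pivot_per_row :: "(nat \<times> nat) set \<Rightarrow> bool" where
  "one_pivot_per_row P \<longleftrightarrow> (\<forall>i k k'. (i, k) \<in> P \<longrightarrow> (i, k') \<in> P \<longrightarrow> k = k')"

definition unpivoted_columns_zero :: "nat \<Rightarrow> 'a::field mat \<Rightarrow> (nat \<times> nat) set \<Rightarrow> bool" where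
  "unpivoted_columns_zero m R P \<longleftrightarrow> (\<forall>k<m. (\<forall>i. (i, k) \<notin> P) \<longrightarrow> (\<forall>i<m. R $$ (i, k) = 0))"

text \<open>This is the shape produced by left-to-right
  column sweeping.\<close>
definition reduced_column ::
  "nat \<Rightarrow> 'a::field mat \<Rightarrow> 'a mat \<Rightarrow> (nat \<times> nat) set \<Rightarrow> nat \<Rightarrow> (nat \<Rightarrow> 'a) \<Rightarrow> bool" where
  "reduced_column m D R P j c \<longleftrightarrow>
     (\<forall>i<m. R $$ (i, j) = D $$ (i, j) - (\<Sum>k<j. c k * R $$ (i, k))) \<and>
     (\<forall>k<j. c k \<noteq> 0 \<longrightarrow> (\<exists>i0. (i0, k) \<in> P \<and> (\<forall>i'. i0 \<le> i' \<and> i' < m \<longrightarrow> R $$ (i', j) = 0)))"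

definition reduced_from :: "nat \<Rightarrow> 'a::field mat \<Rightarrow> 'a mat \<Rightarrow> (nat \<times> nat) set \<Rightarrow> bool" where
  "reduced_from m D R P \<longleftrightarrow> (\<forall>j<m. \<exists>c. reduced_column m D R P j c)"

text \<open>The common output of both algorithms.\<close>
definition sweep_result :: "nat \<Rightarrow> 'a::field mat \<Rightarrow> 'a mat \<Rightarrow> (nat \<times> nat) set \<Rightarrow> bool" where
  "sweep_result m D R P \<longleftrightarrow>
     R \<in> carrier_mat m m \<and> lowest_pivots m R P \<and> one_pivot_per_row P \<and>
     unpivoted_columns_zero m R P \<and> reduced_from m D R P"

lemma lowest_pivotsD:
  assumes "lowest_pivots m R P" "(i, k) \<in> P"
  shows "i < m" "k < m" "R $$ (i, k) \<noteq> 0" "\<And>i'. i < i' \<Longrightarrow> i' < m \<Longrightarrow> R $$ (i', k) = 0"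
  using assms unfolding lowest_pivots_def by blast+

lemma one_pivot_per_rowD:
  "one_pivot_per_row P \<Longrightarrow> (i, k) \<in> P \<Longrightarrow> (i, k') \<in> P \<Longrightarrow> k = k'"
  unfolding one_pivot_per_row_def by blast

lemma lowest_pivots_column_unique:
  assumes "lowest_pivots m R P" "(i, k) \<in> P" "(i', k) \<in> P"
  shows "i = i'"
  using lowest_pivotsD[OF assms(1,2)] lowest_pivotsD[OF assms(1,3)] by (metis linorder_neqE_nat)

lemma pivot_iff:
  assumes "lowest_pivots m R P" "unpivoted_columns_zero m R P"
  shows "(i, k) \<in> P \<longleftrightarrow> i < m \<and> k < m \<and> R $$ (i, k) \<noteq> 0 \<and> (\<forall>i'. i < i' \<and> i' < m \<longrightarrow> R $$ (i', k) = 0)"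
proof
  assume "i < m \<and> k < m \<and> R $$ (i, k) \<noteq> 0 \<and> (\<forall>i'. i < i' \<and> i' < m \<longrightarrow> R $$ (i', k) = 0)"
  moreover obtain i0 where "(i0, k) \<in> P"
    using assms(2) calculation unfolding unpivoted_columns_zero_def by blast
  ultimately show "(i, k) \<in> P"
    using lowest_pivotsD[OF assms(1)] by (metis linorder_neqE_nat)
qed (use lowest_pivotsD[OF assms(1)] in blast)

lemma pivot_combination_lowest_entry:
  fixes R :: "'a::field mat"
  assumes piv: "lowest_pivots m R P" and row: "one_pivot_per_row P"
    and K: "finite K" "K \<noteq> {}" "\<And>k. k \<in> K \<Longrightarrow> \<exists>i. (i, k) \<in> P"
  shows "\<exists>k0\<in>K. \<exists>i0. (i0, k0) \<in> P \<and>
    (\<forall>i'. i0 \<le> i' \<and> i' < m \<longrightarrow> (\<Sum>k\<in>K. d k * R $$ (i', k)) = d k0 * R $$ (i', k0))"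
proof -
  define prow where "prow k = (SOME i. (i, k) \<in> P)" for k
  have prowP: "(prow k, k) \<in> P" if "k \<in> K" for k
    unfolding prow_def using K(3)[OF that] by (rule someI_ex)
  have "Max (prow ` K) \<in> prow ` K" using K(1,2) by simp
  then obtain k0 where k0: "k0 \<in> K" "prow k0 = Max (prow ` K)" by auto
  have lower: "prow k < prow k0" if "k \<in> K" "k \<noteq> k0" for k
  proof -
    have "prow k \<le> prow k0" using k0 K(1) that(1) by simp
    moreover have "prow k \<noteq> prow k0"
      using one_pivot_per_rowD[OF row] prowP that k0(1) by metis
    ultimately show ?thesis by simp
  qed
  have "(\<Sum>k\<in>K. d k * R $$ (i', k)) = d k0 * R $$ (i', k0)"
    if "prow k0 \<le> i'" "i' < m" for i'
  proof -
    have "R $$ (i', k) = 0" if "k \<in> K - {k0}" for k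
      using lowest_pivotsD(4)[OF piv prowP] lower that \<open>prow k0 \<le> i'\<close> \<open>i' < m\<close>
      by (metis DiffD1 DiffD2 insertI1 order.strict_trans2)
    then have "(\<Sum>k\<in>K - {k0}. d k * R $$ (i', k)) = 0" by simp
    then show ?thesis using sum.remove[OF K(1) k0(1), of "\<lambda>k. d k * R $$ (i', k)"] by simp
  qed
  with k0(1) prowP[OF k0(1)] show ?thesis by blast
qed

text \<open>If \<open>R\<close> vanishes in column \<open>j\<close> from the pivot row \<open>i0\<close> of another column downwards and
  agrees with \<open>R'\<close> strictly below \<open>i0\<close>, then it agrees at \<open>i0\<close> as well: otherwise \<open>(i0, j)\<close>
  would be a second pivot of \<open>R'\<close> in row \<open>i0\<close>.\<close>
lemma cleared_pivot_row_entry_agrees: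
  assumes piv: "lowest_pivots m R' P'" and row: "one_pivot_per_row P'"
    and zero: "unpivoted_columns_zero m R' P'"
    and pivot: "(i0, k0) \<in> P'" "k0 \<noteq> j" "j < m"
    and cleared: "\<And>i'. i0 \<le> i' \<Longrightarrow> i' < m \<Longrightarrow> R $$ (i', j) = 0"
    and below: "\<And>i'. i0 < i' \<Longrightarrow> i' < m \<Longrightarrow> R $$ (i', j) = R' $$ (i', j)"
  shows "R $$ (i0, j) = R' $$ (i0, j)"
proof (rule ccontr)
  assume "R $$ (i0, j) \<noteq> R' $$ (i0, j)"
  moreover have "i0 < m" using lowest_pivotsD(1)[OF piv pivot(1)] .
  ultimately have "(i0, j) \<in> P'"
    unfolding pivot_iff[OF piv zero] using cleared below pivot(3) by auto
  with one_pivot_per_rowD[OF row pivot(1)] pivot(2) show False by blast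
qed

lemma reduced_columns_difference:
  fixes R R' :: "'a::field mat"
  assumes red: "reduced_from m D R P" and red': "reduced_from m D R' P'" and j: "j < m"
    and agree: "\<And>k i. k < j \<Longrightarrow> i < m \<Longrightarrow> R $$ (i, k) = R' $$ (i, k)"
  shows "\<exists>d. (\<forall>i<m. R $$ (i, j) - R' $$ (i, j) = (\<Sum>k<j. d k * R $$ (i, k))) \<and>
    (\<forall>k<j. d k \<noteq> 0 \<longrightarrow>
      (\<exists>i0. (i0, k) \<in> P \<and> (\<forall>i'. i0 \<le> i' \<and> i' < m \<longrightarrow> R $$ (i', j) = 0)) \<or>
      (\<exists>i0. (i0, k) \<in> P' \<and> (\<forall>i'. i0 \<le> i' \<and> i' < m \<longrightarrow> R' $$ (i', j) = 0)))"
proof -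
  obtain c where c: "\<And>i. i < m \<Longrightarrow> R $$ (i, j) = D $$ (i, j) - (\<Sum>k<j. c k * R $$ (i, k))"
    "\<And>k. k < j \<Longrightarrow> c k \<noteq> 0 \<Longrightarrow> \<exists>i0. (i0, k) \<in> P \<and> (\<forall>i'. i0 \<le> i' \<and> i' < m \<longrightarrow> R $$ (i', j) = 0)"
    using red j unfolding reduced_from_def reduced_column_def by blast
  obtain c' where c': "\<And>i. i < m \<Longrightarrow> R' $$ (i, j) = D $$ (i, j) - (\<Sum>k<j. c' k * R' $$ (i, k))"
    "\<And>k. k < j \<Longrightarrow> c' k \<noteq> 0 \<Longrightarrow> \<exists>i0. (i0, k) \<in> P' \<and> (\<forall>i'. i0 \<le> i' \<and> i' < m \<longrightarrow> R' $$ (i', j) = 0)"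
    using red' j unfolding reduced_from_def reduced_column_def by blast
  show ?thesis
  proof (intro exI[of _ "\<lambda>k. c' k - c k"] conjI allI impI)
    fix i assume i: "i < m"
    have "(\<Sum>k<j. c' k * R' $$ (i, k)) = (\<Sum>k<j. c' k * R $$ (i, k))"
      using agree i by (intro sum.cong) auto
    then have "R $$ (i, j) - R' $$ (i, j) = (\<Sum>k<j. c' k * R $$ (i, k)) - (\<Sum>k<j. c k * R $$ (i, k))"
      using c(1)[OF i] c'(1)[OF i] by simp
    also have "\<dots> = (\<Sum>k<j. (c' k - c k) * R $$ (i, k))"
      by (simp add: left_diff_distrib sum_subtractf)
    finally show "R $$ (i, j) - R' $$ (i, j) = (\<Sum>k<j. (c' k - c k) * R $$ (i, k))" .
  next
    fix k assume "k < j" "c' k - c k \<noteq> 0"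
    then show "(\<exists>i0. (i0, k) \<in> P \<and> (\<forall>i'. i0 \<le> i' \<and> i' < m \<longrightarrow> R $$ (i', j) = 0)) \<or>
      (\<exists>i0. (i0, k) \<in> P' \<and> (\<forall>i'. i0 \<le> i' \<and> i' < m \<longrightarrow> R' $$ (i', j) = 0))"
      using c(2) c'(2) by (cases "c k = 0") auto
  qed
qed

text \<open>Otherwise their difference is a nontrivial combination of pivot columns; at the lowest
  pivot row \<open>i0\<close> involved it is nonzero, yet one of the two matrices is cleared from \<open>i0\<close>
  downwards, which contradicts the previous lemma.\<close>
lemma sweep_result_column_unique:
  fixes R R' :: "'a::field mat"
  assumes S: "sweep_result m D R P" and S': "sweep_result m D R' P'" and j: "j < m"
    and agree: "\<And>k i. k < j \<Longrightarrow> i < m \<Longrightarrow> R $$ (i, k) = R' $$ (i, k)"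
    and i: "i < m"
  shows "R $$ (i, j) = R' $$ (i, j)"
proof -
  have piv: "lowest_pivots m R P" "one_pivot_per_row P" "unpivoted_columns_zero m R P"
    and piv': "lowest_pivots m R' P'" "one_pivot_per_row P'" "unpivoted_columns_zero m R' P'"
    using S S' unfolding sweep_result_def by auto
  have same_pivots: "(i, k) \<in> P \<longleftrightarrow> (i, k) \<in> P'" if "k < j" for i k
    unfolding pivot_iff[OF piv(1,3)] pivot_iff[OF piv'(1,3)] using agree[OF that] by auto
  have "reduced_from m D R P" "reduced_from m D R' P'"
    using S S' unfolding sweep_result_def by simp_all
  then obtain d where diff0: "\<forall>i<m. R $$ (i, j) - R' $$ (i, j) = (\<Sum>k<j. d k * R $$ (i, k))"
    and cleared: "\<forall>k<j. d k \<noteq> 0 \<longrightarrow>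
      (\<exists>i0. (i0, k) \<in> P \<and> (\<forall>i'. i0 \<le> i' \<and> i' < m \<longrightarrow> R $$ (i', j) = 0)) \<or>
      (\<exists>i0. (i0, k) \<in> P' \<and> (\<forall>i'. i0 \<le> i' \<and> i' < m \<longrightarrow> R' $$ (i', j) = 0))"
    using reduced_columns_difference[OF _ _ j agree] by blast
  define K where "K = {k. k < j \<and> d k \<noteq> 0}"
  have diff: "R $$ (i, j) - R' $$ (i, j) = (\<Sum>k\<in>K. d k * R $$ (i, k))" if "i < m" for i
    unfolding diff0[rule_format, OF that] by (rule sum.mono_neutral_right) (auto simp: K_def)
  show ?thesis
  proof (cases "K = {}")
    case True
    then show ?thesis using diff[OF i] by simp
  next
    case False
    have has_pivot: "\<exists>i0. (i0, k) \<in> P" if "k \<in> K" for k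
    proof -
      from that have k: "k < j" "d k \<noteq> 0" unfolding K_def by auto
      from cleared[rule_format, OF k] show ?thesis
      proof
        assume "\<exists>i0. (i0, k) \<in> P' \<and> (\<forall>i'. i0 \<le> i' \<and> i' < m \<longrightarrow> R' $$ (i', j) = 0)"
        then show ?thesis using same_pivots[OF k(1)] by blast
      qed blast
    qed
    have finK: "finite K" unfolding K_def by simp
    obtain k0 i0 where k0: "k0 \<in> K" "(i0, k0) \<in> P"
      and lowest: "\<And>i'. i0 \<le> i' \<Longrightarrow> i' < m \<Longrightarrow> (\<Sum>k\<in>K. d k * R $$ (i', k)) = d k0 * R $$ (i', k0)"
      using pivot_combination_lowest_entry[where d = d, OF piv(1,2) finK False has_pivot] by blast
    have k0j: "k0 < j" and dk0: "d k0 \<noteq> 0" using k0(1) unfolding K_def by auto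
    have i0m: "i0 < m" using lowest_pivotsD(1)[OF piv(1) k0(2)] .
    have k0P': "(i0, k0) \<in> P'" using same_pivots k0j k0(2) by blast
    have below: "R $$ (i', j) = R' $$ (i', j)" if "i0 < i'" "i' < m" for i'
      using diff[of i'] lowest[of i'] lowest_pivotsD(4)[OF piv(1) k0(2)] that by simp
    have "R $$ (i0, j) = R' $$ (i0, j)"
      using cleared[rule_format, OF k0j dk0]
    proof
      assume "\<exists>i1. (i1, k0) \<in> P \<and> (\<forall>i'. i1 \<le> i' \<and> i' < m \<longrightarrow> R $$ (i', j) = 0)"
      then have "\<forall>i'. i0 \<le> i' \<and> i' < m \<longrightarrow> R $$ (i', j) = 0"
        using lowest_pivots_column_unique[OF piv(1) _ k0(2)] by blast
      then show ?thesis
        using k0j j below by (intro cleared_pivot_row_entry_agrees[OF piv' k0P']) auto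
    next
      assume "\<exists>i1. (i1, k0) \<in> P' \<and> (\<forall>i'. i1 \<le> i' \<and> i' < m \<longrightarrow> R' $$ (i', j) = 0)"
      then have "\<forall>i'. i0 \<le> i' \<and> i' < m \<longrightarrow> R' $$ (i', j) = 0"
        using lowest_pivots_column_unique[OF piv'(1) _ k0P'] by blast
      then have "R' $$ (i0, j) = R $$ (i0, j)"
        using k0j j below by (intro cleared_pivot_row_entry_agrees[OF piv k0(2)]) auto
      then show ?thesis by simp
    qed
    then show ?thesis
      using diff[OF i0m] lowest[OF order.refl i0m] dk0 lowest_pivotsD(3)[OF piv(1) k0(2)] by simp
  qed
qed

theorem sweep_result_unique:
  assumes S: "sweep_result m D R P" and S': "sweep_result m D R' P'"
  shows "R = R' \<and> P = P'"
proof -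
  have columns: "\<forall>i<m. R $$ (i, j) = R' $$ (i, j)" if "j < m" for j
    using that
  proof (induction j rule: less_induct)
    case (less j)
    then show ?case using sweep_result_column_unique[OF S S' less.prems] by simp
  qed
  have "R = R'"
    using S S' columns by (intro eq_matI) (auto simp: sweep_result_def)
  moreover have "(i, k) \<in> P \<longleftrightarrow> (i, k) \<in> P'" for i k
    using S S' \<open>R = R'\<close> pivot_iff[of m R P] pivot_iff[of m R' P'] unfolding sweep_result_def by simp
  then have "P = P'" by auto
  ultimately show ?thesis by simp
qed

section \<open>Column sweeps\<close>

text \<open>Both algorithms use transformations of this form.\<close>
definition sweep_mat :: "nat \<Rightarrow> nat set \<Rightarrow> (nat \<Rightarrow> nat) \<Rightarrow> (nat \<Rightarrow> 'a::field) \<Rightarrow> 'a mat" where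
  "sweep_mat m S p a =
     mat m m (\<lambda>(y, b). (if y = b then 1 else 0) - (if b \<in> S \<and> y = p b then a b else 0))"

lemma sweep_mat_carrier [simp]: "sweep_mat m S p a \<in> carrier_mat m m"
  and sweep_mat_dims [simp]: "dim_row (sweep_mat m S p a) = m" "dim_col (sweep_mat m S p a) = m"
  by (simp_all add: sweep_mat_def)

lemma sweep_mat_index:
  "y < m \<Longrightarrow> b < m \<Longrightarrow>
   sweep_mat m S p a $$ (y, b) = (if y = b then 1 else 0) - (if b \<in> S \<and> y = p b then a b else 0)"
  by (simp add: sweep_mat_def)

lemma mult_index_sum:
  assumes "A \<in> carrier_mat m m" "B \<in> carrier_mat m m" "x < m" "b < m"
  shows "(A * B) $$ (x, b) = (\<Sum>y<m. A $$ (x, y) * B $$ (y, b))"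
  using assms by (simp add: scalar_prod_def atLeast0LessThan)

lemma mult_sweep_mat_index:
  fixes M :: "'a::field mat"
  assumes M: "M \<in> carrier_mat m m" and x: "x < m" and b: "b < m"
    and p: "\<And>b. b \<in> S \<Longrightarrow> p b < m"
  shows "(M * sweep_mat m S p a) $$ (x, b) = M $$ (x, b) - (if b \<in> S then a b * M $$ (x, p b) else 0)"
proof -
  have "(M * sweep_mat m S p a) $$ (x, b) =
        (\<Sum>y<m. M $$ (x, y) * ((if y = b then 1 else 0) - (if b \<in> S \<and> y = p b then a b else 0)))"
    unfolding mult_index_sum[OF M sweep_mat_carrier x b] by (intro sum.cong) (auto simp: sweep_mat_index b)
  also have "\<dots> = (\<Sum>y<m. M $$ (x, y) * (if y = b then 1 else 0)) -
        (\<Sum>y<m. M $$ (x, y) * (if b \<in> S \<and> y = p b then a b else 0))"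
    by (simp add: right_diff_distrib sum_subtractf)
  also have "\<dots> = M $$ (x, b) - (if b \<in> S then a b * M $$ (x, p b) else 0)"
    using b p by (simp add: if_distrib[of "\<lambda>t. _ * t"] mult.commute cong: if_cong)
  finally show ?thesis .
qed

lemma sweep_mat_mult_fixes:
  fixes M :: "'a::field mat"
  assumes M: "M \<in> carrier_mat m m"
    and zero_rows: "\<And>y b. y \<in> S \<Longrightarrow> y < m \<Longrightarrow> b < m \<Longrightarrow> M $$ (y, b) = 0"
  shows "sweep_mat m S p a * M = M"
proof (rule eq_matI)
  fix x b assume "x < dim_row M" "b < dim_col M"
  then have x: "x < m" and b: "b < m" using M by auto
  have "(sweep_mat m S p a * M) $$ (x, b) =
        (\<Sum>y<m. ((if x = y then 1 else 0) - (if y \<in> S \<and> x = p y then a y else 0)) * M $$ (y, b))"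
    unfolding mult_index_sum[OF sweep_mat_carrier M x b] by (intro sum.cong) (auto simp: sweep_mat_index x)
  also have "\<dots> = (\<Sum>y<m. (if x = y then 1 else 0) * M $$ (y, b)) -
        (\<Sum>y<m. (if y \<in> S \<and> x = p y then a y else 0) * M $$ (y, b))"
    by (simp add: left_diff_distrib sum_subtractf)
  also have "(\<Sum>y<m. (if y \<in> S \<and> x = p y then a y else 0) * M $$ (y, b)) = 0"
    using zero_rows b by (intro sum.neutral) auto
  finally show "(sweep_mat m S p a * M) $$ (x, b) = M $$ (x, b)"
    using x by (simp add: if_distrib[of "\<lambda>t. t * _"] cong: if_cong)
qed (use M in auto)

text \<open>If every column is swept by an earlier one, the sweep matrix is unitriangular.\<close>
lemma det_sweep_mat:
  assumes "\<And>b. b \<in> S \<Longrightarrow> p b < b"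
  shows "det (sweep_mat m S p a) = 1"
proof -
  have ut: "upper_triangular (sweep_mat m S p a)"
    unfolding upper_triangular_def
  proof (intro allI impI)
    fix i j assume "i < dim_row (sweep_mat m S p a)" "j < i"
    moreover from this have "i < m" "j < m" by simp_all
    ultimately show "sweep_mat m S p a $$ (i, j) = 0"
      using assms[of j] by (auto simp: sweep_mat_index)
  qed
  have "diag_mat (sweep_mat m S p a) = map (\<lambda>i. sweep_mat m S p a $$ (i, i)) [0..<m]"
    by (simp add: diag_mat_def)
  also have "\<dots> = map (\<lambda>_. 1) [0..<m]"
    by (rule map_cong) (auto simp: sweep_mat_index dest: assms)
  finally show ?thesis
    by (simp add: det_upper_triangular[OF ut sweep_mat_carrier] map_replicate_const)
qed

lemma conjugation_by_fixing_unit: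
  fixes T M :: "'a::field mat"
  assumes T: "T \<in> carrier_mat m m" and M: "M \<in> carrier_mat m m"
    and det: "det T \<noteq> 0" and fixed: "T * M = M"
  shows "the (mat_inverse T) * M * T = M * T"
proof -
  obtain S where S: "mat_inverse T = Some S"
    using mat_inverse(1)[OF T] det_non_zero_imp_unit[OF T det, of "()"] by fastforce
  then have ST: "S * T = 1\<^sub>m m" and Sc: "S \<in> carrier_mat m m"
    using mat_inverse(2)[OF T S] by auto
  have "S * M = S * (T * M)" by (simp add: fixed)
  also have "\<dots> = M" using assoc_mult_mat[OF Sc T M] ST M by simp
  finally show ?thesis using S by simp
qed

lemma isa_T_eq_sweep_mat:
  "isa_T m r M P =
   sweep_mat m {b. (b - r, b) \<in> isa_cob m r M P} (\<lambda>b. piv_col P (b - r))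
     (\<lambda>b. M $$ (b - r, b) / M $$ (b - r, piv_col P (b - r)))"
proof (rule eq_matI)
  fix y b assume "y < dim_row (sweep_mat m {b. (b - r, b) \<in> isa_cob m r M P} (\<lambda>b. piv_col P (b - r))
     (\<lambda>b. M $$ (b - r, b) / M $$ (b - r, piv_col P (b - r))))"
    "b < dim_col (sweep_mat m {b. (b - r, b) \<in> isa_cob m r M P} (\<lambda>b. piv_col P (b - r))
     (\<lambda>b. M $$ (b - r, b) / M $$ (b - r, piv_col P (b - r))))"
  then have y: "y < m" and b: "b < m" by simp_all
  define CB where "CB = isa_cob m r M P"
  define f where "f q = M $$ q / M $$ (fst q, piv_col P (fst q))" for q
  have CB_diag: "i = j - r" if "(i, j) \<in> CB" for i j
    using that unfolding CB_def isa_cob_def by auto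
  have finite: "finite CB"
    by (rule finite_subset[of _ "{..<m} \<times> {..<m}"]) (auto simp: CB_def isa_cob_def)
  have summand: "(case q of (i, j) \<Rightarrow> M $$ (i, j) / M $$ (i, piv_col P i) * U_mat m (piv_col P i) j $$ (y, b))
      = (if q = (b - r, b) then (if y = piv_col P (b - r) then f q else 0) else 0)"
    if "q \<in> CB" for q
  proof -
    obtain i j where q: "q = (i, j)" by (cases q)
    show ?thesis
      using CB_diag[of i j] that y b unfolding q by (cases "j = b") (auto simp: U_mat_def f_def)
  qed
  have "(\<Sum>(i, j)\<in>CB. M $$ (i, j) / M $$ (i, piv_col P i) * U_mat m (piv_col P i) j $$ (y, b))
      = (\<Sum>q\<in>CB. if q = (b - r, b) then (if y = piv_col P (b - r) then f q else 0) else 0)"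
    by (rule sum.cong[OF refl], rule summand)
  also have "\<dots> = (if (b - r, b) \<in> CB \<and> y = piv_col P (b - r) then f (b - r, b) else 0)"
    using finite by (simp add: sum.delta)
  finally show "isa_T m r M P $$ (y, b) =
      sweep_mat m {b. (b - r, b) \<in> isa_cob m r M P} (\<lambda>b. piv_col P (b - r))
        (\<lambda>b. M $$ (b - r, b) / M $$ (b - r, piv_col P (b - r))) $$ (y, b)"
    using y b by (simp add: isa_T_def sweep_mat_index CB_def f_def)
qed (simp_all add: isa_T_def)

lemma rev_T_eq_sweep_mat:
  assumes "finite C"
  shows "rev_T m M C =
    sweep_mat m {j \<in> C. rev_j m M C < j \<and> M $$ (rev_i m M C, j) \<noteq> 0} (\<lambda>_. rev_j m M C)
      (\<lambda>b. M $$ (rev_i m M C, b) / M $$ (rev_i m M C, rev_j m M C))"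
proof (rule eq_matI)
  define it where "it = rev_i m M C"
  define jt where "jt = rev_j m M C"
  fix y b assume "y < dim_row (sweep_mat m {j \<in> C. rev_j m M C < j \<and> M $$ (rev_i m M C, j) \<noteq> 0}
      (\<lambda>_. rev_j m M C) (\<lambda>b. M $$ (rev_i m M C, b) / M $$ (rev_i m M C, rev_j m M C)))"
    "b < dim_col (sweep_mat m {j \<in> C. rev_j m M C < j \<and> M $$ (rev_i m M C, j) \<noteq> 0}
      (\<lambda>_. rev_j m M C) (\<lambda>b. M $$ (rev_i m M C, b) / M $$ (rev_i m M C, rev_j m M C)))"
  then have y: "y < m" and b: "b < m" by simp_all
  have "(\<Sum>j\<in>{j \<in> C. j > jt}. (M $$ (it, j) / M $$ (it, jt)) * U_mat m jt j $$ (y, b))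
      = (\<Sum>j\<in>{j \<in> C. j > jt}. if j = b then (if y = jt then M $$ (it, b) / M $$ (it, jt) else 0) else 0)"
    using y b by (intro sum.cong) (auto simp: U_mat_def)
  also have "\<dots> = (if b \<in> C \<and> jt < b \<and> M $$ (it, b) \<noteq> 0 \<and> y = jt then M $$ (it, b) / M $$ (it, jt) else 0)"
    using assms by (simp add: sum.delta)
  finally show "rev_T m M C $$ (y, b) =
    sweep_mat m {j \<in> C. rev_j m M C < j \<and> M $$ (rev_i m M C, j) \<noteq> 0} (\<lambda>_. rev_j m M C)
      (\<lambda>b. M $$ (rev_i m M C, b) / M $$ (rev_i m M C, rev_j m M C)) $$ (y, b)"
    using y b by (simp add: rev_T_def Let_def sweep_mat_index it_def jt_def)
qed (simp_all add: rev_T_def Let_def)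

lemma reduced_column_unchanged:
  assumes red: "reduced_column m D M P j c" and sub: "P \<subseteq> P'"
    and used_kept: "\<And>k x. k < j \<Longrightarrow> c k \<noteq> 0 \<Longrightarrow> x < m \<Longrightarrow> M' $$ (x, k) = M $$ (x, k)"
    and kept: "\<And>x. x < m \<Longrightarrow> M' $$ (x, j) = M $$ (x, j)"
  shows "reduced_column m D M' P' j c"
proof -
  have sums: "(\<Sum>k<j. c k * M' $$ (x, k)) = (\<Sum>k<j. c k * M $$ (x, k))" if "x < m" for x
    using used_kept that by (intro sum.cong) auto
  show ?thesis
    unfolding reduced_column_def
  proof (intro conjI allI impI)
    fix i assume "i < m"
    then show "M' $$ (i, j) = D $$ (i, j) - (\<Sum>k<j. c k * M' $$ (i, k))"
      using red sums kept unfolding reduced_column_def by simp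
  next
    fix k assume "k < j" "c k \<noteq> 0"
    then obtain i0 where "(i0, k) \<in> P" "\<forall>i'. i0 \<le> i' \<and> i' < m \<longrightarrow> M $$ (i', j) = 0"
      using red unfolding reduced_column_def by blast
    then show "\<exists>i0. (i0, k) \<in> P' \<and> (\<forall>i'. i0 \<le> i' \<and> i' < m \<longrightarrow> M' $$ (i', j) = 0)"
      using sub kept by auto
  qed
qed

text \<open>Subtracting \<open>a\<close> times an earlier pivot column \<open>p\<close>, pivoted at \<open>q\<close>, from column \<open>j\<close> keeps
  column \<open>j\<close> reduced when \<open>a\<close> is chosen to clear the entry \<open>(q, j)\<close> and both columns vanish
  below row \<open>q\<close>: the coefficient of \<open>p\<close> grows by \<open>a\<close>, and the other coefficients stay valid
  because their pivot rows lie below \<open>q\<close>.\<close>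
lemma reduced_column_sweep:
  fixes M M' :: "'a::field mat"
  assumes red: "reduced_column m D M P j c" and sub: "P \<subseteq> P'"
    and used_kept: "\<And>k x. k < j \<Longrightarrow> c k \<noteq> 0 \<Longrightarrow> x < m \<Longrightarrow> M' $$ (x, k) = M $$ (x, k)"
    and pivot: "p < j" "(q, p) \<in> P'" "q < m" "M $$ (q, j) \<noteq> 0"
    and clears: "a * M $$ (q, p) = M $$ (q, j)"
    and below: "\<And>i'. q < i' \<Longrightarrow> i' < m \<Longrightarrow> M $$ (i', j) = 0 \<and> M $$ (i', p) = 0"
    and pivot_kept: "\<And>x. x < m \<Longrightarrow> M' $$ (x, p) = M $$ (x, p)"
    and swept: "\<And>x. x < m \<Longrightarrow> M' $$ (x, j) = M $$ (x, j) - a * M $$ (x, p)"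
  shows "reduced_column m D M' P' j (\<lambda>k. c k + (if k = p then a else 0))"
  unfolding reduced_column_def
proof (intro conjI allI impI)
  fix x assume x: "x < m"
  have "(\<Sum>k<j. (c k + (if k = p then a else 0)) * M' $$ (x, k)) =
        (\<Sum>k<j. c k * M' $$ (x, k)) + a * M' $$ (x, p)"
    using pivot(1) by (simp add: distrib_right sum.distrib if_distrib[of "\<lambda>t. t * _"] cong: if_cong)
  also have "(\<Sum>k<j. c k * M' $$ (x, k)) = (\<Sum>k<j. c k * M $$ (x, k))"
    using used_kept x by (intro sum.cong) auto
  finally show "M' $$ (x, j) = D $$ (x, j) - (\<Sum>k<j. (c k + (if k = p then a else 0)) * M' $$ (x, k))"
    using red x swept[OF x] pivot_kept[OF x] unfolding reduced_column_def by simp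
next
  fix k assume k: "k < j" "c k + (if k = p then a else 0) \<noteq> 0"
  show "\<exists>i0. (i0, k) \<in> P' \<and> (\<forall>i'. i0 \<le> i' \<and> i' < m \<longrightarrow> M' $$ (i', j) = 0)"
  proof (cases "k = p")
    case True
    have "M' $$ (i', j) = 0" if "q \<le> i'" "i' < m" for i'
      using swept[OF that(2)] below[of i'] clears that by (cases "i' = q") auto
    then show ?thesis using pivot(2) True by blast
  next
    case False
    then obtain i0 where i0: "(i0, k) \<in> P" "\<forall>i'. i0 \<le> i' \<and> i' < m \<longrightarrow> M $$ (i', j) = 0"
      using red k unfolding reduced_column_def by auto
    then have "q < i0" using pivot(3,4) by (meson not_le)
    then have "M' $$ (i', j) = 0" if "i0 \<le> i'" "i' < m" for i'
      using swept[OF that(2)] i0(2) below[of i'] that by simp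
    then show ?thesis using i0(1) sub by blast
  qed
qed

lemma reduced_from_sweep:
  fixes M :: "'a::field mat" and p q :: "nat \<Rightarrow> nat"
  assumes M: "M \<in> carrier_mat m m" and red: "reduced_from m D M P" and sub: "P \<subseteq> P'"
    and unswept: "\<And>i k. (i, k) \<in> P' \<Longrightarrow> k \<notin> S"
    and swept: "\<And>b. b \<in> S \<Longrightarrow> b < m \<and> p b < b \<and> (q b, p b) \<in> P' \<and> q b < m \<and>
       M $$ (q b, p b) \<noteq> 0 \<and> M $$ (q b, b) \<noteq> 0 \<and>
       (\<forall>i'. q b < i' \<and> i' < m \<longrightarrow> M $$ (i', b) = 0 \<and> M $$ (i', p b) = 0)"
  shows "reduced_from m D (M * sweep_mat m S p (\<lambda>b. M $$ (q b, b) / M $$ (q b, p b))) P'"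
  unfolding reduced_from_def
proof (intro allI impI)
  fix j assume j: "j < m"
  define M' where "M' = M * sweep_mat m S p (\<lambda>b. M $$ (q b, b) / M $$ (q b, p b))"
  have M'_index: "M' $$ (x, b) = M $$ (x, b) - (if b \<in> S then M $$ (q b, b) / M $$ (q b, p b) * M $$ (x, p b) else 0)"
    if "x < m" "b < m" for x b
    unfolding M'_def using mult_sweep_mat_index[OF M that] swept by (meson order.strict_trans)
  have kept: "M' $$ (x, k) = M $$ (x, k)" if "(i, k) \<in> P'" "x < m" "k < m" for i k x
    using M'_index[OF that(2,3)] unswept[OF that(1)] by simp
  obtain c where c: "reduced_column m D M P j c" using red j unfolding reduced_from_def by blast
  text \<open>Columns used in the old combination carry pivots, hence are not swept.\<close>
  have used_kept: "M' $$ (x, k) = M $$ (x, k)" if "k < j" "c k \<noteq> 0" "x < m" for k x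
    using c that kept sub j unfolding reduced_column_def by (meson order.strict_trans subsetD)
  show "\<exists>c. reduced_column m D M' P' j c"
  proof (cases "j \<in> S")
    case False
    then have "M' $$ (x, j) = M $$ (x, j)" if "x < m" for x using M'_index[OF that j] by simp
    then show ?thesis by (blast intro: reduced_column_unchanged[OF c sub used_kept])
  next
    case True
    with swept have pj: "p j < j" "(q j, p j) \<in> P'" "q j < m" "M $$ (q j, j) \<noteq> 0"
      "\<And>i'. q j < i' \<Longrightarrow> i' < m \<Longrightarrow> M $$ (i', j) = 0 \<and> M $$ (i', p j) = 0"
      and "M $$ (q j, p j) \<noteq> 0" by blast+
    then have clears: "M $$ (q j, j) / M $$ (q j, p j) * M $$ (q j, p j) = M $$ (q j, j)" by simp
    have "M' $$ (x, p j) = M $$ (x, p j)" if "x < m" for x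
      using kept[OF pj(2) that] pj(1) j by simp
    moreover have "M' $$ (x, j) = M $$ (x, j) - M $$ (q j, j) / M $$ (q j, p j) * M $$ (x, p j)"
      if "x < m" for x
      using M'_index[OF that j] True by simp
    ultimately show ?thesis
      by (blast intro: reduced_column_sweep[OF c sub used_kept pj(1-4) clears pj(5)])
  qed
qed

section \<open>The Incremental Sweeping Algorithm\<close>

definition support_in :: "nat \<Rightarrow> 'a::field mat \<Rightarrow> nat set \<Rightarrow> nat set \<Rightarrow> bool" where
  "support_in m M J0 J1 \<longleftrightarrow> (\<forall>x<m. \<forall>y<m. M $$ (x, y) \<noteq> 0 \<longrightarrow> x \<in> J0 \<and> y \<in> J1)"

definition isa_invariant ::
  "nat \<Rightarrow> 'a::field mat \<Rightarrow> nat set \<Rightarrow> nat set \<Rightarrow> nat \<Rightarrow> 'a mat \<Rightarrow> (nat \<times> nat) set \<Rightarrow> bool" where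
  "isa_invariant m D J0 J1 k M P \<longleftrightarrow>
     M \<in> carrier_mat m m \<and> lowest_pivots m M P \<and> one_pivot_per_row P \<and> reduced_from m D M P \<and>
     support_in m M J0 J1 \<and>
     (\<forall>j<m. (\<forall>i. (i, j) \<notin> P) \<longrightarrow> (\<forall>i<m. j \<le> i + k \<longrightarrow> M $$ (i, j) = 0)) \<and>
     (\<forall>i p. (i, p) \<in> P \<longrightarrow> p \<le> i + k)"

locale isa_iteration =
  fixes m :: nat and D :: "'a::field mat" and J0 J1 :: "nat set" and k :: nat
    and M :: "'a mat" and P :: "(nat \<times> nat) set"
  assumes invariant: "isa_invariant m D J0 J1 k M P"
    and disjoint: "J0 \<inter> J1 = {}"
begin

definition swept :: "nat set" where
  "swept = {b. (b - Suc k, b) \<in> isa_cob m (Suc k) M P}"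

definition pcol :: "nat \<Rightarrow> nat" where
  "pcol b = piv_col P (b - Suc k)"

definition coeff :: "nat \<Rightarrow> 'a" where
  "coeff b = M $$ (b - Suc k, b) / M $$ (b - Suc k, pcol b)"

abbreviation new_pivots :: "(nat \<times> nat) set" where
  "new_pivots \<equiv> isa_new_primary m (Suc k) M P"

lemma M_carrier: "M \<in> carrier_mat m m"
  and piv: "lowest_pivots m M P"
  and row: "one_pivot_per_row P"
  and reduced: "reduced_from m D M P"
  and support: "support_in m M J0 J1"
  and cleared: "\<And>j i. j < m \<Longrightarrow> \<forall>i. (i, j) \<notin> P \<Longrightarrow> i < m \<Longrightarrow> j \<le> i + k \<Longrightarrow> M $$ (i, j) = 0"
  and pivot_diagonal: "\<And>i p. (i, p) \<in> P \<Longrightarrow> p \<le> i + k"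
  using invariant unfolding isa_invariant_def by blast+

lemma swept_facts:
  assumes "b \<in> swept"
  shows "Suc k \<le> b" "b < m" "M $$ (b - Suc k, b) \<noteq> 0" "\<And>i. (i, b) \<notin> P"
    "(b - Suc k, pcol b) \<in> P" "pcol b < b" "b \<in> J1"
proof -
  show "Suc k \<le> b" "b < m" "M $$ (b - Suc k, b) \<noteq> 0" "\<And>i. (i, b) \<notin> P"
    using assms unfolding swept_def isa_cob_def by auto
  obtain p where "(b - Suc k, p) \<in> P" using assms unfolding swept_def isa_cob_def by auto
  then show pc: "(b - Suc k, pcol b) \<in> P"
    using row unfolding pcol_def piv_col_def one_pivot_per_row_def by (metis the_equality)
  show "pcol b < b" using pivot_diagonal[OF pc] \<open>Suc k \<le> b\<close> by linarith
  have "b - Suc k < m" using \<open>b < m\<close> by linarith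
  then show "b \<in> J1"
    using support \<open>b < m\<close> \<open>M $$ (b - Suc k, b) \<noteq> 0\<close> unfolding support_in_def by blast
qed

lemma new_pivot_facts:
  assumes "(i, j) \<in> new_pivots"
  shows "i = j - Suc k" "Suc k \<le> j" "j < m" "M $$ (i, j) \<noteq> 0" "\<And>i'. (i', j) \<notin> P" "\<And>p. (i, p) \<notin> P"
    "\<And>i'. i < i' \<Longrightarrow> i' < m \<Longrightarrow> M $$ (i', j) = 0" "i < m"
proof -
  show facts: "i = j - Suc k" "Suc k \<le> j" "j < m" "M $$ (i, j) \<noteq> 0" "\<And>i'. (i', j) \<notin> P" "\<And>p. (i, p) \<notin> P"
    using assms unfolding isa_new_primary_def by auto
  show "i < m" using facts(1,3) by simp
  show "M $$ (i', j) = 0" if "i < i'" "i' < m" for i'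
    using cleared[of j i'] facts that by auto
qed

lemma isa_T_eq: "isa_T m (Suc k) M P = sweep_mat m swept pcol coeff"
  unfolding isa_T_eq_sweep_mat swept_def pcol_def coeff_def ..

text \<open>Swept columns lie in \<open>J1\<close>, so the corresponding rows of \<open>M\<close> vanish and conjugation by
  \<open>T\<close> acts as right multiplication.\<close>
lemma isa_step_eq:
  "isa_step m (Suc k) (M, P) = (M * sweep_mat m swept pcol coeff, P \<union> new_pivots)"
proof -
  have "sweep_mat m swept pcol coeff * M = M"
  proof (rule sweep_mat_mult_fixes[OF M_carrier])
    fix y b assume "y \<in> swept" "y < m" "b < m"
    then have "y \<notin> J0" using swept_facts(7) disjoint by auto
    then show "M $$ (y, b) = 0" using support \<open>y < m\<close> \<open>b < m\<close> unfolding support_in_def by auto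
  qed
  moreover have "det (sweep_mat m swept pcol coeff) = 1"
    by (rule det_sweep_mat) (rule swept_facts(6))
  ultimately show ?thesis
    using conjugation_by_fixing_unit[OF sweep_mat_carrier M_carrier]
    by (simp add: isa_step_def isa_T_eq)
qed

lemma swept_index:
  assumes "x < m" "b < m"
  shows "(M * sweep_mat m swept pcol coeff) $$ (x, b) =
         M $$ (x, b) - (if b \<in> swept then coeff b * M $$ (x, pcol b) else 0)"
  using mult_sweep_mat_index[OF M_carrier assms] swept_facts(2,6) by (meson order.strict_trans)

abbreviation next_mat :: "'a mat" where
  "next_mat \<equiv> M * sweep_mat m swept pcol coeff"

lemma pivot_columns_not_swept:
  assumes "(i, j) \<in> P \<union> new_pivots"
  shows "j \<notin> swept"
proof
  assume j: "j \<in> swept"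
  show False
  proof (cases "(i, j) \<in> P")
    case False
    then have "(i, j) \<in> new_pivots" using assms by blast
    then show False using new_pivot_facts(1,6) swept_facts(5)[OF j] by blast
  qed (use swept_facts(4)[OF j] in blast)
qed

lemma pivot_columns_kept:
  assumes "(i, j) \<in> P \<union> new_pivots" "x < m"
  shows "next_mat $$ (x, j) = M $$ (x, j)"
proof -
  have "j < m" using assms(1) lowest_pivotsD(2)[OF piv] new_pivot_facts(3) by blast
  then show ?thesis using swept_index[OF assms(2)] pivot_columns_not_swept[OF assms(1)] by simp
qed

lemma next_lowest_pivots: "lowest_pivots m next_mat (P \<union> new_pivots)"
  unfolding lowest_pivots_def
proof (intro allI impI)
  fix i j assume ij: "(i, j) \<in> P \<union> new_pivots"
  have "i < m \<and> j < m \<and> M $$ (i, j) \<noteq> 0 \<and> (\<forall>i'. i < i' \<and> i' < m \<longrightarrow> M $$ (i', j) = 0)"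
    using ij lowest_pivotsD[OF piv] new_pivot_facts by (cases "(i, j) \<in> P") auto
  then show "i < m \<and> j < m \<and> next_mat $$ (i, j) \<noteq> 0 \<and>
      (\<forall>i'. i < i' \<and> i' < m \<longrightarrow> next_mat $$ (i', j) = 0)"
    using pivot_columns_kept[OF ij] by auto
qed

lemma next_one_pivot_per_row: "one_pivot_per_row (P \<union> new_pivots)"
  unfolding one_pivot_per_row_def
proof (intro allI impI)
  fix i j j' assume ij: "(i, j) \<in> P \<union> new_pivots" and ij': "(i, j') \<in> P \<union> new_pivots"
  show "j = j'"
  proof (cases "(i, j) \<in> P")
    case True
    then have "(i, j') \<in> P" using ij' new_pivot_facts(6) by blast
    then show ?thesis using True one_pivot_per_rowD[OF row] by blast
  next
    case False
    then have new: "(i, j) \<in> new_pivots" using ij by blast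
    then have "(i, j') \<in> new_pivots" using ij' new_pivot_facts(6) by blast
    then show ?thesis using new new_pivot_facts(1,2) by (metis le_add_diff_inverse2)
  qed
qed

lemma next_reduced: "reduced_from m D next_mat (P \<union> new_pivots)"
proof -
  have coeff_eq: "coeff = (\<lambda>b. M $$ (b - Suc k, b) / M $$ (b - Suc k, pcol b))"
    by (simp add: fun_eq_iff coeff_def)
  have "b < m \<and> pcol b < b \<and> (b - Suc k, pcol b) \<in> P \<union> new_pivots \<and> b - Suc k < m \<and>
       M $$ (b - Suc k, pcol b) \<noteq> 0 \<and> M $$ (b - Suc k, b) \<noteq> 0 \<and>
       (\<forall>i'. b - Suc k < i' \<and> i' < m \<longrightarrow> M $$ (i', b) = 0 \<and> M $$ (i', pcol b) = 0)"
    if b: "b \<in> swept" for b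
  proof -
    note sf = swept_facts[OF b]
    have "M $$ (i', b) = 0" if "b - Suc k < i'" "i' < m" for i'
      using cleared[OF sf(2) _ that(2)] sf(1,4) that(1) by simp
    then show ?thesis
      using sf lowest_pivotsD[OF piv sf(5)] by auto
  qed
  then show ?thesis
    unfolding coeff_eq using pivot_columns_not_swept
    by (intro reduced_from_sweep[where q = "\<lambda>b. b - Suc k", OF M_carrier reduced Un_upper1]) blast+
qed

lemma next_support: "support_in m next_mat J0 J1"
  unfolding support_in_def
proof (intro allI impI)
  fix x y assume xy: "x < m" "y < m" "next_mat $$ (x, y) \<noteq> 0"
  show "x \<in> J0 \<and> y \<in> J1"
  proof (cases "M $$ (x, y) = 0")
    case True
    then have y: "y \<in> swept" and "M $$ (x, pcol y) \<noteq> 0"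
      using xy swept_index by (auto split: if_splits)
    moreover have "pcol y < m" using swept_facts(2,6)[OF y] by simp
    ultimately show ?thesis
      using support xy(1) swept_facts(7)[OF y] unfolding support_in_def by blast
  qed (use support xy in \<open>auto simp: support_in_def\<close>)
qed

text \<open>After iteration \<open>Suc k\<close> every unpivoted column is zero on the diagonals up to \<open>Suc k\<close>:
  a nonzero entry on diagonal \<open>Suc k\<close> either became a new pivot or was swept away.\<close>
lemma next_cleared:
  assumes j: "j < m" and unpivoted: "\<forall>i. (i, j) \<notin> P \<union> new_pivots"
    and i: "i < m" and diag: "j \<le> i + Suc k"
  shows "next_mat $$ (i, j) = 0"
proof (cases "j \<le> i + k")
  case True
  have "M $$ (i, j) = 0" using cleared[OF j _ i True] unpivoted by blast
  moreover have "M $$ (i, pcol j) = 0" if "j \<in> swept"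
    using lowest_pivotsD(4)[OF piv swept_facts(5)[OF that]] i True swept_facts(1)[OF that] by simp
  ultimately show ?thesis using swept_index[OF i j] by simp
next
  case False
  then have ij: "i = j - Suc k" "Suc k \<le> j" using diag by auto
  show ?thesis
  proof (cases "j \<in> swept")
    case True
    then show ?thesis
      using swept_index[OF i j] ij lowest_pivotsD(3)[OF piv swept_facts(5)[OF True]]
      by (simp add: coeff_def)
  next
    case not_swept: False
    have "M $$ (i, j) = 0"
    proof (rule ccontr)
      assume "M $$ (i, j) \<noteq> 0"
      then have "(i, j) \<in> isa_cob m (Suc k) M P \<or> (i, j) \<in> new_pivots"
        using ij j unpivoted unfolding isa_cob_def isa_new_primary_def by auto
      then show False using not_swept unpivoted ij unfolding swept_def by auto
    qed
    then show ?thesis using swept_index[OF i j] not_swept by simp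
  qed
qed

lemma isa_invariant_next: "isa_invariant m D J0 J1 (Suc k) next_mat (P \<union> new_pivots)"
  unfolding isa_invariant_def
  using next_lowest_pivots next_one_pivot_per_row next_reduced next_support next_cleared
    pivot_diagonal new_pivot_facts(1,2) M_carrier
  by (fastforce simp del: isa_new_primary_def)

end

lemma isa_invariant_initial:
  assumes "connection_matrix_2 m D J0 J1"
  shows "isa_invariant m D J0 J1 0 D {}"
proof -
  have D: "D \<in> carrier_mat m m"
    and entries: "\<And>i j. i < m \<Longrightarrow> j < m \<Longrightarrow> D $$ (i, j) \<noteq> 0 \<Longrightarrow> i < j \<and> i \<in> J0 \<and> j \<in> J1"
    using assms unfolding connection_matrix_2_def by blast+
  have "reduced_from m D D {}"
    unfolding reduced_from_def reduced_column_def by (intro allI impI exI[of _ "\<lambda>_. 0"]) simp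
  moreover have "D $$ (i, j) = 0" if "i < m" "j < m" "j \<le> i + 0" for i j
    using entries[OF that(1,2)] that(3) by fastforce
  ultimately show ?thesis
    using D entries
    unfolding isa_invariant_def lowest_pivots_def one_pivot_per_row_def support_in_def by blast
qed

lemma isa_invariant_iterates:
  assumes cm: "connection_matrix_2 m D J0 J1"
  shows "isa_invariant m D J0 J1 k (fst (isa m D k)) (snd (isa m D k))"
proof (induction k)
  case 0
  then show ?case using isa_invariant_initial[OF cm] by simp
next
  case (Suc k)
  have "J0 \<inter> J1 = {}" using cm unfolding connection_matrix_2_def by blast
  then interpret isa_iteration m D J0 J1 k "fst (isa m D k)" "snd (isa m D k)"
    using Suc.IH by unfold_locales
  have "isa m D (Suc k) = isa_step m (Suc k) (fst (isa m D k), snd (isa m D k))" by simp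
  then show ?case using isa_step_eq isa_invariant_next by simp
qed

text \<open>After \<open>m - 1\<close> iterations every diagonal has been treated, so unpivoted columns vanish.\<close>
theorem isa_final_sweep_result:
  assumes "m \<ge> 1" and "connection_matrix_2 m D J0 J1"
  shows "sweep_result m D (fst (isa_final m D)) (snd (isa_final m D))"
  using isa_invariant_iterates[OF assms(2), of "m - 1"] assms(1)
  unfolding isa_final_def isa_invariant_def sweep_result_def unpivoted_columns_zero_def by auto

section \<open>The Revised 1-Block Incremental Sweeping Algorithm\<close>

definition rev_invariant ::
  "nat \<Rightarrow> 'a::field mat \<Rightarrow> 'a mat \<Rightarrow> nat set \<Rightarrow> (nat \<times> nat) set \<Rightarrow> bool" where
  "rev_invariant m D M C P \<longleftrightarrow>
     M \<in> carrier_mat m m \<and> lowest_pivots m M P \<and> one_pivot_per_row P \<and> reduced_from m D M P \<and>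
     C \<subseteq> {..<m} \<and> (\<forall>k<m. k \<in> C \<longleftrightarrow> (\<forall>i. (i, k) \<notin> P)) \<and>
     (\<forall>i k i' b. (i, k) \<in> P \<and> i \<le> i' \<and> i' < m \<and> b \<in> C \<longrightarrow> M $$ (i', b) = 0)"

locale rev_iteration =
  fixes m :: nat and D M :: "'a::field mat" and C :: "nat set" and P :: "(nat \<times> nat) set"
  assumes invariant: "rev_invariant m D M C P"
    and active: "rev_active m M C"
begin

lemma M_carrier: "M \<in> carrier_mat m m"
  and piv: "lowest_pivots m M P"
  and row: "one_pivot_per_row P"
  and reduced: "reduced_from m D M P"
  and C_bound: "C \<subseteq> {..<m}"
  using invariant unfolding rev_invariant_def by simp_all

lemma C_unpivoted: "k < m \<Longrightarrow> k \<in> C \<longleftrightarrow> (\<forall>i. (i, k) \<notin> P)"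
  using invariant unfolding rev_invariant_def by simp

lemma below_pivots: "(i, k) \<in> P \<Longrightarrow> i \<le> i' \<Longrightarrow> i' < m \<Longrightarrow> b \<in> C \<Longrightarrow> M $$ (i', b) = 0"
  using invariant unfolding rev_invariant_def by meson

lemma finite_C: "finite C"
  using C_bound finite_subset by blast

abbreviation it :: nat where "it \<equiv> rev_i m M C"
abbreviation jt :: nat where "jt \<equiv> rev_j m M C"

definition swept :: "nat set" where
  "swept = {j \<in> C. jt < j \<and> M $$ (it, j) \<noteq> 0}"

definition coeff :: "nat \<Rightarrow> 'a" where
  "coeff b = M $$ (it, b) / M $$ (it, jt)"

lemma pivot_choice:
  shows "it < m" "jt \<in> C" "M $$ (it, jt) \<noteq> 0"
    and "\<And>i' b. it < i' \<Longrightarrow> i' < m \<Longrightarrow> b \<in> C \<Longrightarrow> M $$ (i', b) = 0"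
    and "\<And>b. b \<in> C \<Longrightarrow> b < jt \<Longrightarrow> M $$ (it, b) = 0"
proof -
  define rows where "rows = {i. i < m \<and> (\<exists>j\<in>C. M $$ (i, j) \<noteq> 0)}"
  have rows: "finite rows" "rows \<noteq> {}" using active unfolding rows_def rev_active_def by auto
  have it_eq: "it = Max rows" unfolding rev_i_def rows_def ..
  have it_rows: "it \<in> rows" unfolding it_eq using rows by (rule Max_in)
  then show "it < m" unfolding rows_def by simp
  show "M $$ (i', b) = 0" if "it < i'" "i' < m" "b \<in> C" for i' b
  proof (rule ccontr)
    assume "M $$ (i', b) \<noteq> 0"
    then have "i' \<in> rows" using that unfolding rows_def by blast
    then have "i' \<le> it" unfolding it_eq using rows(1) by simp
    with that(1) show False by simp
  qed
  define cols where "cols = {j \<in> C. M $$ (it, j) \<noteq> 0}"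
  have cols: "finite cols" "cols \<noteq> {}" using finite_C it_rows unfolding cols_def rows_def by auto
  have jt_eq: "jt = Min cols" unfolding rev_j_def cols_def ..
  have "jt \<in> cols" unfolding jt_eq using cols by (rule Min_in)
  then show "jt \<in> C" "M $$ (it, jt) \<noteq> 0" unfolding cols_def by auto
  show "M $$ (it, b) = 0" if "b \<in> C" "b < jt" for b
  proof (rule ccontr)
    assume "M $$ (it, b) \<noteq> 0"
    then have "b \<in> cols" using that unfolding cols_def by blast
    then have "jt \<le> b" unfolding jt_eq using cols(1) by simp
    with that(2) show False by simp
  qed
qed

lemma pivot_row_unpivoted: "(it, k) \<notin> P"
proof
  assume "(it, k) \<in> P"
  then have "M $$ (it, jt) = 0" using below_pivots pivot_choice(1,2) by simp
  with pivot_choice(3) show False by simp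
qed

lemma rev_step_eq:
  "rev_step m (M, C, P) = (M * sweep_mat m swept (\<lambda>_. jt) coeff, C - {jt}, P \<union> {(it, jt)})"
  unfolding rev_step_def Let_def fst_conv snd_conv rev_T_eq_sweep_mat[OF finite_C, of m M]
    swept_def coeff_def[abs_def] ..

lemma swept_index:
  assumes "x < m" "b < m"
  shows "(M * sweep_mat m swept (\<lambda>_. jt) coeff) $$ (x, b) =
         M $$ (x, b) - (if b \<in> swept then coeff b * M $$ (x, jt) else 0)"
  by (rule mult_sweep_mat_index[OF M_carrier assms]) (use pivot_choice(2) C_bound in auto)

abbreviation next_mat :: "'a mat" where
  "next_mat \<equiv> M * sweep_mat m swept (\<lambda>_. jt) coeff"

lemma pivot_columns_kept:
  assumes "(i, k) \<in> insert (it, jt) P" "x < m"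
  shows "next_mat $$ (x, k) = M $$ (x, k)"
proof -
  have "k < m \<and> k \<notin> swept"
  proof (cases "(i, k) \<in> P")
    case True
    then show ?thesis using lowest_pivotsD(2)[OF piv True] C_unpivoted unfolding swept_def by blast
  next
    case False
    then show ?thesis using assms(1) pivot_choice(2) C_bound unfolding swept_def by auto
  qed
  then show ?thesis using swept_index[OF assms(2)] by simp
qed

lemma next_lowest_pivots: "lowest_pivots m next_mat (insert (it, jt) P)"
  unfolding lowest_pivots_def
proof (intro allI impI)
  fix i k assume ik: "(i, k) \<in> insert (it, jt) P"
  have "i < m \<and> k < m \<and> M $$ (i, k) \<noteq> 0 \<and> (\<forall>i'. i < i' \<and> i' < m \<longrightarrow> M $$ (i', k) = 0)"
    using ik lowest_pivotsD[OF piv] pivot_choice(1-4) C_bound by auto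
  then show "i < m \<and> k < m \<and> next_mat $$ (i, k) \<noteq> 0 \<and>
      (\<forall>i'. i < i' \<and> i' < m \<longrightarrow> next_mat $$ (i', k) = 0)"
    using pivot_columns_kept[OF ik] by auto
qed

lemma next_one_pivot_per_row: "one_pivot_per_row (insert (it, jt) P)"
  using row pivot_row_unpivoted unfolding one_pivot_per_row_def by blast

lemma next_reduced: "reduced_from m D next_mat (insert (it, jt) P)"
proof -
  have coeff_eq: "coeff = (\<lambda>b. M $$ (it, b) / M $$ (it, jt))"
    by (simp add: fun_eq_iff coeff_def)
  have "b < m \<and> jt < b \<and> (it, jt) \<in> insert (it, jt) P \<and> it < m \<and>
       M $$ (it, jt) \<noteq> 0 \<and> M $$ (it, b) \<noteq> 0 \<and>
       (\<forall>i'. it < i' \<and> i' < m \<longrightarrow> M $$ (i', b) = 0 \<and> M $$ (i', jt) = 0)"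
    if b: "b \<in> swept" for b
    using b C_bound pivot_choice(1-4) unfolding swept_def by auto
  moreover have "k \<notin> swept" if "(i, k) \<in> insert (it, jt) P" for i k
    using that lowest_pivotsD(2)[OF piv] C_unpivoted unfolding swept_def by auto
  ultimately show ?thesis
    unfolding coeff_eq
    by (intro reduced_from_sweep[where q = "\<lambda>_. it" and p = "\<lambda>_. jt", OF M_carrier reduced]) blast+
qed

text \<open>The remaining active columns vanish in and below every pivot row: for the new pivot row
  \<open>it\<close> this is exactly what the sweep achieves.\<close>
lemma next_below_pivots:
  assumes ik: "(i, k) \<in> insert (it, jt) P" and i': "i \<le> i'" "i' < m" and b: "b \<in> C - {jt}"
  shows "next_mat $$ (i', b) = 0"
proof -
  have bm: "b < m" using b C_bound by auto
  show ?thesis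
  proof (cases "(i, k) \<in> P \<or> it < i'")
    case True
    then have "M $$ (i', b) = 0 \<and> M $$ (i', jt) = 0"
      using below_pivots[of i k i'] pivot_choice(2,4) i' b by auto
    then show ?thesis using swept_index[OF i'(2) bm] by simp
  next
    case False
    then have "i' = it" using ik i' by auto
    show ?thesis
    proof (cases "b \<in> swept")
      case True
      then show ?thesis using swept_index[OF i'(2) bm] pivot_choice(3) \<open>i' = it\<close>
        by (simp add: coeff_def)
    next
      case False
      then have "M $$ (it, b) = 0" using b pivot_choice(5)[of b] unfolding swept_def by auto
      then show ?thesis using swept_index[OF i'(2) bm] False \<open>i' = it\<close> by simp
    qed
  qed
qed

lemma rev_invariant_next: "rev_invariant m D next_mat (C - {jt}) (insert (it, jt) P)"
proof -
  have "\<forall>k<m. k \<in> C - {jt} \<longleftrightarrow> (\<forall>i. (i, k) \<notin> insert (it, jt) P)"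
    using C_unpivoted pivot_choice(2) by auto
  moreover have "\<forall>i k i' b. (i, k) \<in> insert (it, jt) P \<and> i \<le> i' \<and> i' < m \<and> b \<in> C - {jt} \<longrightarrow>
      next_mat $$ (i', b) = 0"
    using next_below_pivots by blast
  ultimately show ?thesis
    unfolding rev_invariant_def
    using next_lowest_pivots next_one_pivot_per_row next_reduced C_bound M_carrier
    by (intro conjI) auto
qed

end

lemma rev_invariant_initial:
  assumes "D \<in> carrier_mat m m"
  shows "rev_invariant m D D {0..<m} {}"
proof -
  have "reduced_from m D D {}"
    unfolding reduced_from_def reduced_column_def by (intro allI impI exI[of _ "\<lambda>_. 0"]) simp
  moreover have "lowest_pivots m D {}" "one_pivot_per_row {}"
    unfolding lowest_pivots_def one_pivot_per_row_def by simp_all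
  ultimately show ?thesis
    using assms unfolding rev_invariant_def by (simp add: atLeast0LessThan)
qed

text \<open>Each pass removes one active column, so a loop with fuel at least \<open>card C\<close> terminates
  with no active column left, preserving the invariant.\<close>
lemma rev_loop_invariant:
  assumes "rev_invariant m D M C P" "card C \<le> n"
  shows "rev_invariant m D (fst (rev_loop m n (M, C, P))) (fst (snd (rev_loop m n (M, C, P))))
           (snd (snd (rev_loop m n (M, C, P)))) \<and>
         \<not> rev_active m (fst (rev_loop m n (M, C, P))) (fst (snd (rev_loop m n (M, C, P))))"
  using assms
proof (induction n arbitrary: M C P)
  case 0
  have "C \<subseteq> {..<m}" using "0.prems"(1) by (simp add: rev_invariant_def)
  then have "finite C" using finite_subset by blast
  then have "C = {}" using "0.prems"(2) by simp
  then show ?case using "0.prems"(1) by (simp add: rev_active_def)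
next
  case (Suc n)
  show ?case
  proof (cases "rev_active m M C")
    case True
    interpret rev_iteration m D M C P using Suc.prems(1) True by unfold_locales
    have "card (C - {jt}) \<le> n"
      using Suc.prems(2) pivot_choice(2) finite_C by (simp add: card_Diff_singleton)
    then show ?thesis
      using Suc.IH[OF rev_invariant_next] True rev_step_eq by simp
  qed (use Suc.prems(1) in simp)
qed

theorem rev_final_sweep_result:
  assumes "connection_matrix_2 m D J0 J1"
  shows "sweep_result m D (fst (rev_final m D)) (snd (rev_final m D))"
proof -
  define S where "S = rev_loop m m (D, {0..<m}, {})"
  have "D \<in> carrier_mat m m" using assms unfolding connection_matrix_2_def by blast
  then have inv: "rev_invariant m D (fst S) (fst (snd S)) (snd (snd S))"
    and finished: "\<not> rev_active m (fst S) (fst (snd S))"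
    using rev_loop_invariant[OF rev_invariant_initial] unfolding S_def by auto
  have "unpivoted_columns_zero m (fst S) (snd (snd S))"
    unfolding unpivoted_columns_zero_def
  proof (intro allI impI)
    fix k i assume k: "k < m" "\<forall>i. (i, k) \<notin> snd (snd S)" and i: "i < m"
    then have "k \<in> fst (snd S)" using inv by (simp add: rev_invariant_def)
    then show "fst S $$ (i, k) = 0" using finished i unfolding rev_active_def by blast
  qed
  moreover have "rev_final m D = (fst S, snd (snd S))" by (simp add: rev_final_def S_def Let_def)
  ultimately show ?thesis
    using inv unfolding sweep_result_def rev_invariant_def by simp
qed

theorem mainTheorem8:
  fixes D :: "'a::field mat" and m :: nat and J0 J1 :: "nat set"
  assumes "m \<ge> 1"
    and "connection_matrix_2 m D J0 J1"
  shows "fst (rev_final m D) = fst (isa_final m D) \<and>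
         snd (rev_final m D) = snd (isa_final m D)"
  using sweep_result_unique[OF rev_final_sweep_result[OF assms(2)] isa_final_sweep_result[OF assms]] .

end
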